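(* Let $\Omega\subset\mathbb{R}^N$ ($N\ge2$) be a bounded Lipschitz domain, $p_1,\dots,p_N:\mathbb{R}\to[2,\infty)$ continuous with $N<p_i^-\le p_i(t)\le p_i^+<\infty$ for all $t$ (where $p_i^\mp$ are the essential inf/sup of $p_i$ over $\mathbb{R}$), $p^-:=\min_ip_i^-$, $p^+:=\max_ip_i^+$, and $f:\Omega\times\mathbb{R}\to\mathbb{R}$ Carathéodory with $f(\cdot,0)<0$ and $|f(x,t)|\le c(1+|t|^{r-1})$ for some $c>0$, $1\le r<p^-$. Fix $\epsilon>0$ and define $I:W^{1,p^+}_0(\Omega)\to(W^{1,p^+}_0(\Omega))^*$ by $$\langle I(u),v\rangle=\sum_{i=1}^N\int_\Omega\Big|\frac{\partial u}{\partial x_i}\Big|^{p_i(u)-2}\frac{\partial u}{\partial x_i}\frac{\partial v}{\partial x_i}dx+\epsilon\int_\Omega|\nabla u|^{p^+-2}\nabla u\cdot\nabla v\,dx-\int_\Omega f(x,u)v\,dx.$$ Then $I$ is coercive and bounded.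
   Context: An operator $J:X\to X^*$ is bounded if it maps bounded sets to bounded sets, and coercive if $\langle J(u),u\rangle/\|u\|\to\infty$ as $\|u\|\to\infty$. *)

theory Defs
  imports "HOL-Analysis.Analysis"
begin

fun iter_pd :: "'a::euclidean_space list \<Rightarrow> ('a \<Rightarrow> real) \<Rightarrow> 'a \<Rightarrow> real" where
  "iter_pd [] f = f"
| "iter_pd (v # vs) f = (\<lambda>x. frechet_derivative (iter_pd vs f) (at x) v)"

definition smooth_fun :: "('a::euclidean_space \<Rightarrow> real) \<Rightarrow> bool" where
  "smooth_fun f \<longleftrightarrow> (\<forall>vs x. iter_pd vs f differentiable (at x))"

definition tsupport :: "('a::euclidean_space \<Rightarrow> real) \<Rightarrow> 'a set" where
  "tsupport f = closure {x. f x \<noteq> 0}"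

definition test_fun :: "'a::euclidean_space set \<Rightarrow> ('a \<Rightarrow> real) \<Rightarrow> bool" where
  "test_fun \<Omega> \<phi> \<longleftrightarrow> smooth_fun \<phi> \<and> compact (tsupport \<phi>) \<and> tsupport \<phi> \<subseteq> \<Omega>"

definition grad :: "('a::euclidean_space \<Rightarrow> real) \<Rightarrow> 'a \<Rightarrow> 'a" where
  "grad \<phi> x = (\<Sum>b\<in>Basis. frechet_derivative \<phi> (at x) b *\<^sub>R b)"

text \<open>Bounded Lipschitz domain: bounded, open, connected, and near every boundary point
  the domain is (after a rigid motion) the region below the graph of a Lipschitz function.\<close>
definition lipschitz_domain :: "'a::euclidean_space set \<Rightarrow> bool" where
  "lipschitz_domain \<Omega> \<longleftrightarrow> open \<Omega> \<and> connected \<Omega> \<and> \<Omega> \<noteq> {} \<and> bounded \<Omega> \<and>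
     (\<forall>x\<in>frontier \<Omega>. \<exists>r>0. \<exists>T c e \<gamma> L. orthogonal_transformation T \<and> e \<in> Basis \<and>
        L-lipschitz_on UNIV (\<gamma> :: 'a \<Rightarrow> real) \<and>
        ball x r \<inter> \<Omega> = ball x r \<inter> (\<lambda>y. c + T y) ` {y. y \<bullet> e < \<gamma> (y - (y \<bullet> e) *\<^sub>R e)})"

definition Lq :: "real \<Rightarrow> 'a::euclidean_space set \<Rightarrow> ('a \<Rightarrow> 'b::euclidean_space) \<Rightarrow> bool" where
  "Lq q \<Omega> u \<longleftrightarrow> u \<in> borel_measurable (lebesgue_on \<Omega>) \<and>
     integrable (lebesgue_on \<Omega>) (\<lambda>x. norm (u x) powr q)"

definition Lq_norm :: "real \<Rightarrow> 'a::euclidean_space set \<Rightarrow> ('a \<Rightarrow> 'b::euclidean_space) \<Rightarrow> real" where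
  "Lq_norm q \<Omega> u = (integral\<^sup>L (lebesgue_on \<Omega>) (\<lambda>x. norm (u x) powr q)) powr (1 / q)"

text \<open>W_0^{1,q}(Omega) as the closure of C_c^infinity(Omega) in the W^{1,q} norm.
  An element is represented by a pair (u, g) of the function and its (weak) gradient.\<close>
definition W0 :: "real \<Rightarrow> 'a::euclidean_space set \<Rightarrow> (('a \<Rightarrow> real) \<times> ('a \<Rightarrow> 'a)) set" where
  "W0 q \<Omega> = {(u, g). Lq q \<Omega> u \<and> Lq q \<Omega> g \<and>
      (\<exists>\<phi>. (\<forall>k. test_fun \<Omega> (\<phi> k)) \<and>
         (\<lambda>k. Lq_norm q \<Omega> (\<lambda>x. u x - \<phi> k x)) \<longlonglongrightarrow> 0 \<and>
         (\<lambda>k. Lq_norm q \<Omega> (\<lambda>x. g x - grad (\<phi> k) x)) \<longlonglongrightarrow> 0)}"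

definition W_norm :: "real \<Rightarrow> 'a::euclidean_space set \<Rightarrow> ('a \<Rightarrow> real) \<times> ('a \<Rightarrow> 'a) \<Rightarrow> real" where
  "W_norm q \<Omega> ug = Lq_norm q \<Omega> (fst ug) + Lq_norm q \<Omega> (snd ug)"

definition caratheodory :: "'a::euclidean_space set \<Rightarrow> ('a \<Rightarrow> real \<Rightarrow> real) \<Rightarrow> bool" where
  "caratheodory \<Omega> f \<longleftrightarrow> (\<forall>t. (\<lambda>x. f x t) \<in> borel_measurable (lebesgue_on \<Omega>)) \<and>
     (AE x in lebesgue_on \<Omega>. continuous_on UNIV (f x))"

definition pminus :: "(real \<Rightarrow> real) \<Rightarrow> real" where "pminus q = Inf (range q)"
definition pplus :: "(real \<Rightarrow> real) \<Rightarrow> real" where "pplus q = Sup (range q)"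

definition opI :: "'a::euclidean_space set \<Rightarrow> ('a \<Rightarrow> real \<Rightarrow> real) \<Rightarrow> real \<Rightarrow> real \<Rightarrow>
    ('a \<Rightarrow> real \<Rightarrow> real) \<Rightarrow> ('a \<Rightarrow> real) \<times> ('a \<Rightarrow> 'a) \<Rightarrow> ('a \<Rightarrow> real) \<times> ('a \<Rightarrow> 'a) \<Rightarrow> real" where
  "opI \<Omega> p q \<epsilon> f ug vh =
     (let u = fst ug; g = snd ug; v = fst vh; h = snd vh in
       (\<Sum>i\<in>Basis. integral\<^sup>L (lebesgue_on \<Omega>)
          (\<lambda>x. \<bar>g x \<bullet> i\<bar> powr (p i (u x) - 2) * (g x \<bullet> i) * (h x \<bullet> i)))
       + \<epsilon> * integral\<^sup>L (lebesgue_on \<Omega>) (\<lambda>x. norm (g x) powr (q - 2) * (g x \<bullet> h x))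
       - integral\<^sup>L (lebesgue_on \<Omega>) (\<lambda>x. f x (u x) * v x))"

end

theory Submission
  imports Defs
begin

text \<open>
  On the diagonal the anisotropic terms of \<open>opI\<close> are nonnegative and the \<open>\<epsilon>\<close>-term is
  \<open>\<epsilon> \<integral> |\<nabla>u|^q\<close>. By the growth bound on \<open>f\<close> and Poincare's inequality
  \<open>\<integral> |u|^q \<le> C \<integral> |\<nabla>u|^q\<close>, the \<open>f\<close>-term costs at most half of it plus a constant.
  Poincare's inequality also bounds the \<open>W^{1,q}\<close> norm by a multiple of \<open>(\<integral> |\<nabla>u|^q)^{1/q}\<close>,
  and \<open>q \<ge> 2\<close> turns this into coercivity. For boundedness, every integrand of \<open>\<langle>I(u), v\<rangle>\<close>
  is dominated by \<open>k (1 + |w|^{q-1}) |y|\<close> with \<open>w\<close> built from \<open>u\<close> and \<open>y\<close> from \<open>v\<close>, and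
  Young's inequality bounds its integral by \<open>\<parallel>y\<parallel>_q\<close> times a constant depending only on \<open>\<parallel>w\<parallel>_q\<close>.
  Poincare's inequality is proved for test functions by integrating the fundamental theorem of
  calculus along coordinate segments that leave \<open>\<Omega>\<close>, and extends to \<open>W_0^{1,q}\<close> by approximation.
\<close>

section \<open>Elementary inequalities\<close>

lemma powr_mult_le_young:
  fixes w y s q :: real
  assumes "w \<ge> 0" "y \<ge> 0" "s > 0" "q > 1"
  shows "w powr (q - 1) * y \<le> s * w powr q + y powr q / s powr (q - 1)"
proof (cases "y \<le> s * w")
  case True
  have "w powr (q - 1) * y \<le> w powr (q - 1) * (s * w)"
    using True assms by (intro mult_left_mono) auto
  also have "\<dots> = s * w powr q"
    using assms powr_mult_base[of w "q - 1"] by (simp add: ac_simps)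
  finally show ?thesis using assms by (smt (verit) divide_nonneg_nonneg powr_ge_zero)
next
  case False
  hence "w \<le> y / s" using assms by (simp add: field_simps)
  hence "w powr (q - 1) * y \<le> (y / s) powr (q - 1) * y"
    using assms by (intro mult_right_mono powr_mono2) auto
  also have "\<dots> = y powr q / s powr (q - 1)"
    using assms powr_mult_base[of y "q - 1"] by (simp add: powr_divide ac_simps)
  finally show ?thesis using assms by (smt (verit) mult_nonneg_nonneg powr_ge_zero)
qed

lemma growth_le_young:
  fixes w y s q :: real
  assumes "w \<ge> 0" "y \<ge> 0" "s > 0" "q > 1"
  shows "(1 + w powr (q - 1)) * y \<le> s + s * w powr q + 2 * (y powr q / s powr (q - 1))"
  using powr_mult_le_young[OF assms] powr_mult_le_young[of 1 y s q] assms
  by (simp add: algebra_simps)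

lemma powr_le_eps_mult_powr_add_const:
  fixes a q \<delta> :: real
  assumes "0 \<le> a" "a < q" "\<delta> > 0"
  obtains C where "C \<ge> 0" "\<And>t. t \<ge> 0 \<Longrightarrow> t powr a \<le> \<delta> * t powr q + C"
proof
  define T where "T = \<delta> powr (-1 / (q - a))"
  have T: "T > 0" using assms by (simp add: T_def)
  have "T powr (q - a) = \<delta> powr (-1)"
    using assms by (simp add: T_def powr_powr)
  hence T_powr: "T powr (q - a) = 1 / \<delta>"
    using assms by (simp add: powr_minus divide_inverse)
  fix t :: real assume t: "t \<ge> 0"
  show "t powr a \<le> \<delta> * t powr q + T powr a"
  proof (cases "t \<le> T")
    case True
    hence "t powr a \<le> T powr a" using t assms by (intro powr_mono2) auto
    then show ?thesis using assms by (smt (verit) mult_nonneg_nonneg powr_ge_zero)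
  next
    case False
    hence "1 / \<delta> \<le> t powr (q - a)"
      unfolding T_powr[symmetric] using T assms by (intro powr_mono2) auto
    hence "1 \<le> \<delta> * t powr (q - a)" using assms by (simp add: field_simps)
    hence "t powr a \<le> \<delta> * t powr (q - a) * t powr a" by (simp add: mult_le_cancel_right1)
    also have "\<dots> = \<delta> * t powr q" using T False by (simp flip: powr_add)
    finally show ?thesis by (smt (verit) powr_ge_zero)
  qed
qed simp

lemma sublinear_le_eps_powr_add_const:
  fixes r q \<delta> :: real
  assumes "1 \<le> r" "r < q" "\<delta> > 0"
  obtains C where "C \<ge> 0" "\<And>t. t \<ge> 0 \<Longrightarrow> (1 + t powr (r - 1)) * t \<le> \<delta> * t powr q + C"
proof -
  obtain C1 where C1: "C1 \<ge> 0" "\<And>t. t \<ge> 0 \<Longrightarrow> t powr 1 \<le> \<delta> / 2 * t powr q + C1"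
    using powr_le_eps_mult_powr_add_const[of 1 q "\<delta> / 2"] assms by auto
  obtain C2 where C2: "C2 \<ge> 0" "\<And>t. t \<ge> 0 \<Longrightarrow> t powr r \<le> \<delta> / 2 * t powr q + C2"
    using powr_le_eps_mult_powr_add_const[of r q "\<delta> / 2"] assms by auto
  show ?thesis
  proof (rule that[of "C1 + C2"])
    fix t :: real assume t: "t \<ge> 0"
    have "(1 + t powr (r - 1)) * t = t powr 1 + t powr r"
      using t assms powr_mult_base[of t "r - 1"] by (simp add: algebra_simps)
    then show "(1 + t powr (r - 1)) * t \<le> \<delta> * t powr q + (C1 + C2)"
      using C1(2)[OF t] C2(2)[OF t] by simp
  qed (use C1 C2 in simp)
qed

lemma powr_le_1_add_powr:
  fixes t a b :: real
  assumes "t \<ge> 0" "0 \<le> a" "a \<le> b"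
  shows "t powr a \<le> 1 + t powr b"
proof (cases "t \<le> 1")
  case True
  hence "t powr a \<le> 1" using assms by (cases "t = 0") (auto intro: powr_le1)
  then show ?thesis by (smt (verit) powr_ge_zero)
next
  case False
  hence "t powr a \<le> t powr b" using assms by (intro powr_mono) auto
  then show ?thesis by simp
qed

lemma norm_add_powr_le:
  fixes x y :: "'a::real_normed_vector"
  assumes "q \<ge> 0"
  shows "norm (x + y) powr q \<le> 2 powr q * (norm x powr q + norm y powr q)"
proof -
  have "norm (x + y) powr q \<le> (2 * max (norm x) (norm y)) powr q"
    using assms norm_triangle_ineq[of x y] by (intro powr_mono2) auto
  also have "\<dots> = 2 powr q * max (norm x) (norm y) powr q" by (simp add: powr_mult)
  also have "max (norm x) (norm y) powr q \<le> norm x powr q + norm y powr q"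
    by (cases "norm x \<le> norm y") (auto simp: max_def)
  finally show ?thesis by (simp add: mult_left_mono)
qed

lemma norm_powr_mult_inner_self:
  fixes x :: "'a::real_inner"
  shows "norm x powr (q - 2) * (x \<bullet> x) = norm x powr q"
  using powr_mult_base[of "norm x" "q - 2"] powr_mult_base[of "norm x" "q - 1"]
  by (simp add: power2_norm_eq_inner[symmetric] power2_eq_square ac_simps)

lemma abs_anisotropic_term_le:
  fixes G H :: "'a::euclidean_space"
  assumes "2 \<le> p" "p \<le> q" "i \<in> Basis"
  shows "\<bar>\<bar>G \<bullet> i\<bar> powr (p - 2) * (G \<bullet> i) * (H \<bullet> i)\<bar> \<le> (1 + norm G powr (q - 1)) * norm H"
proof -
  have "\<bar>\<bar>G \<bullet> i\<bar> powr (p - 2) * (G \<bullet> i) * (H \<bullet> i)\<bar> = \<bar>G \<bullet> i\<bar> powr (p - 1) * \<bar>H \<bullet> i\<bar>"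
    using powr_mult_base[of "\<bar>G \<bullet> i\<bar>" "p - 2"] by (simp add: abs_mult ac_simps)
  also have "\<dots> \<le> (1 + norm G powr (q - 1)) * norm H"
  proof (intro mult_mono)
    have "\<bar>G \<bullet> i\<bar> powr (p - 1) \<le> 1 + \<bar>G \<bullet> i\<bar> powr (q - 1)"
      using assms by (intro powr_le_1_add_powr) auto
    also have "\<bar>G \<bullet> i\<bar> powr (q - 1) \<le> norm G powr (q - 1)"
      using assms Basis_le_norm[OF assms(3), of G] by (intro powr_mono2) auto
    finally show "\<bar>G \<bullet> i\<bar> powr (p - 1) \<le> 1 + norm G powr (q - 1)" by simp
    show "\<bar>H \<bullet> i\<bar> \<le> norm H" by (rule Basis_le_norm[OF assms(3)])
  qed auto
  finally show ?thesis .
qed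

lemma abs_isotropic_term_le:
  fixes G H :: "'a::real_inner"
  shows "\<bar>norm G powr (q - 2) * (G \<bullet> H)\<bar> \<le> (1 + norm G powr (q - 1)) * norm H"
proof -
  have "\<bar>norm G powr (q - 2) * (G \<bullet> H)\<bar> \<le> norm G powr (q - 2) * (norm G * norm H)"
    by (simp add: abs_mult mult_left_mono Cauchy_Schwarz_ineq2)
  also have "\<dots> = norm G powr (q - 1) * norm H"
    using powr_mult_base[of "norm G" "q - 2"] by (simp add: ac_simps)
  also have "\<dots> \<le> (1 + norm G powr (q - 1)) * norm H" by (simp add: mult_right_mono)
  finally show ?thesis .
qed

lemma abs_growth_mult_le:
  fixes t y z c r q :: real
  assumes "1 \<le> r" "r \<le> q" "c \<ge> 0" "\<bar>z\<bar> \<le> c * (1 + \<bar>t\<bar> powr (r - 1))"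
  shows "\<bar>z * y\<bar> \<le> 2 * c * ((1 + \<bar>t\<bar> powr (q - 1)) * \<bar>y\<bar>)"
proof -
  have "\<bar>t\<bar> powr (r - 1) \<le> 1 + \<bar>t\<bar> powr (q - 1)" using assms by (intro powr_le_1_add_powr) auto
  then have "1 + \<bar>t\<bar> powr (r - 1) \<le> 2 * (1 + \<bar>t\<bar> powr (q - 1))"
    using powr_ge_zero[of "\<bar>t\<bar>" "q - 1"] by (smt (verit))
  then have "c * (1 + \<bar>t\<bar> powr (r - 1)) \<le> c * (2 * (1 + \<bar>t\<bar> powr (q - 1)))"
    using assms by (intro mult_left_mono)
  then have "\<bar>z\<bar> * \<bar>y\<bar> \<le> c * (2 * (1 + \<bar>t\<bar> powr (q - 1))) * \<bar>y\<bar>"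
    using assms(4) by (intro mult_right_mono) auto
  then show ?thesis by (simp add: abs_mult ac_simps)
qed

lemma coercive_of_powr_lower_bound:
  fixes a K A M q :: real
  assumes "a > 0" "K > 0" "q \<ge> 2"
  obtains R where "\<And>W x. R \<le> W \<Longrightarrow> a * (W / K) powr q - A \<le> x \<Longrightarrow> M \<le> x / W"
proof
  define Z where "Z = (\<bar>M\<bar> * K + \<bar>A\<bar>) / a + 1"
  fix W x assume W: "K * max 1 Z \<le> W" and x: "a * (W / K) powr q - A \<le> x"
  define z where "z = W / K"
  have "K * max 1 Z \<le> K * z" using W assms by (simp add: z_def)
  hence "max 1 Z \<le> z" using assms by simp
  hence z: "1 \<le> z" "Z \<le> z" by auto
  have W_eq: "W = K * z" using assms by (simp add: z_def)
  have "\<bar>M\<bar> * K + \<bar>A\<bar> \<le> a * Z"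
    using assms by (simp add: Z_def field_simps)
  hence "(\<bar>M\<bar> * K + \<bar>A\<bar>) * z \<le> a * Z * z"
    using z by (intro mult_right_mono) auto
  also have "\<dots> \<le> a * z powr 2"
    using assms z by (simp add: powr_numeral power2_eq_square)
  also have "\<dots> \<le> a * z powr q"
    using assms z by (intro mult_left_mono powr_mono) auto
  finally have "\<bar>M\<bar> * W + \<bar>A\<bar> * z \<le> a * (W / K) powr q"
    using assms by (simp add: W_eq z_def[symmetric] algebra_simps)
  moreover have "\<bar>A\<bar> \<le> \<bar>A\<bar> * z" using z by (simp add: mult_le_cancel_left1)
  moreover have "M * W \<le> \<bar>M\<bar> * W"
    using W_eq z assms by (intro mult_right_mono) auto
  ultimately have "M * W \<le> x"
    using x by linarith
  then show "M \<le> x / W"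
    using W_eq z assms by (simp add: pos_le_divide_eq)
qed

section \<open>Integral estimates\<close>

lemma abs_integral_le_integral_AE:
  fixes F \<Phi> :: "'b \<Rightarrow> real"
  assumes "integrable M \<Phi>" "AE x in M. \<bar>F x\<bar> \<le> \<Phi> x"
  shows "\<bar>integral\<^sup>L M F\<bar> \<le> integral\<^sup>L M \<Phi>"
proof -
  have "\<bar>integral\<^sup>L M F\<bar> \<le> integral\<^sup>L M (\<lambda>x. \<bar>F x\<bar>)" by (rule integral_abs_bound)
  also have "\<dots> \<le> integral\<^sup>L M \<Phi>"
    using assms by (intro integral_mono_AE') (auto elim: eventually_mono)
  finally show ?thesis .
qed

lemma abs_integral_le_powr_growth_young:
  fixes F w y :: "'b \<Rightarrow> real"
  assumes M: "finite_measure M" and q: "q > 1" and k: "k \<ge> 0" and s: "s > 0"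
    and w: "\<And>x. w x \<ge> 0" "integrable M (\<lambda>x. w x powr q)"
    and y: "\<And>x. y x \<ge> 0" "integrable M (\<lambda>x. y x powr q)" "integral\<^sup>L M (\<lambda>x. y x powr q) \<le> s powr q"
    and F: "AE x in M. \<bar>F x\<bar> \<le> k * ((1 + w x powr (q - 1)) * y x)"
  shows "\<bar>integral\<^sup>L M F\<bar> \<le> k * s * (measure M (space M) + integral\<^sup>L M (\<lambda>x. w x powr q) + 2)"
proof -
  let ?\<Phi> = "\<lambda>x. k * (s + s * w x powr q + 2 * (y x powr q / s powr (q - 1)))"
  have \<Phi>_int: "integrable M (\<lambda>x. s)" "integrable M (\<lambda>x. s * w x powr q)"
    "integrable M (\<lambda>x. 2 * (y x powr q / s powr (q - 1)))"
    using w y finite_measure.integrable_const[OF M] by auto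
  have \<Phi>_ge: "k * ((1 + w x powr (q - 1)) * y x) \<le> ?\<Phi> x" for x
    using growth_le_young[OF w(1) y(1) s q] k by (rule mult_left_mono)
  have "\<bar>integral\<^sup>L M F\<bar> \<le> integral\<^sup>L M ?\<Phi>"
  proof (rule abs_integral_le_integral_AE)
    show "integrable M ?\<Phi>"
      using Bochner_Integration.integrable_mult_right[OF Bochner_Integration.integrable_add[OF
          Bochner_Integration.integrable_add[OF \<Phi>_int(1,2)] \<Phi>_int(3)], of k] by simp
    show "AE x in M. \<bar>F x\<bar> \<le> ?\<Phi> x"
      using F by eventually_elim (use \<Phi>_ge in \<open>blast intro: order_trans\<close>)
  qed
  also have "\<dots> = k * (s * measure M (space M) + s * integral\<^sup>L M (\<lambda>x. w x powr q)
                   + 2 * (integral\<^sup>L M (\<lambda>x. y x powr q) / s powr (q - 1)))"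
    using \<Phi>_int by (simp add: Bochner_Integration.integral_add ac_simps)
  also have "\<dots> \<le> k * (s * measure M (space M) + s * integral\<^sup>L M (\<lambda>x. w x powr q)
                   + 2 * (s powr q / s powr (q - 1)))"
    using y(3) s k by (intro mult_left_mono add_mono divide_right_mono) auto
  also have "s powr q / s powr (q - 1) = s" using s by (simp add: powr_diff)
  finally show ?thesis by (simp add: algebra_simps)
qed

text \<open>Letting \<open>s\<close> decrease to the \<open>L\<^sup>q\<close> norm of \<open>y\<close> yields a weak form of Hoelder's inequality.\<close>
lemma abs_integral_le_powr_growth:
  fixes F w y :: "'b \<Rightarrow> real"
  assumes M: "finite_measure M" and q: "q > 1" and k: "k \<ge> 0"
    and w: "\<And>x. w x \<ge> 0" "integrable M (\<lambda>x. w x powr q)"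
    and y: "\<And>x. y x \<ge> 0" "integrable M (\<lambda>x. y x powr q)"
    and F: "AE x in M. \<bar>F x\<bar> \<le> k * ((1 + w x powr (q - 1)) * y x)"
  shows "\<bar>integral\<^sup>L M F\<bar> \<le> k * (integral\<^sup>L M (\<lambda>x. y x powr q)) powr (1 / q)
           * (measure M (space M) + integral\<^sup>L M (\<lambda>x. w x powr q) + 2)"
proof -
  define Y where "Y = (integral\<^sup>L M (\<lambda>x. y x powr q)) powr (1 / q)"
  define C where "C = measure M (space M) + integral\<^sup>L M (\<lambda>x. w x powr q) + 2"
  have Y: "Y \<ge> 0" "integral\<^sup>L M (\<lambda>x. y x powr q) = Y powr q"
    using q by (simp_all add: Y_def powr_powr integral_nonneg_AE)
  have "\<bar>integral\<^sup>L M F\<bar> \<le> k * s * C" if "Y < s" for s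
    unfolding C_def using that Y q
    by (intro abs_integral_le_powr_growth_young[OF M q k _ w y(1,2) _ F]) (auto intro: powr_mono2)
  moreover have "((\<lambda>s. k * s * C) \<longlongrightarrow> k * Y * C) (at_right Y)" by (intro tendsto_intros)
  ultimately have "\<bar>integral\<^sup>L M F\<bar> \<le> k * Y * C"
    by (intro tendsto_lowerbound[of _ _ "at_right Y"]) (auto intro: eventually_mono[OF eventually_at_right_less])
  then show ?thesis by (simp add: Y_def C_def)
qed

lemma
  fixes f g :: "'b \<Rightarrow> 'c::{banach, second_countable_topology}"
  assumes q: "q \<ge> 0" and [measurable]: "f \<in> borel_measurable M" "g \<in> borel_measurable M"
    and fi: "integrable M (\<lambda>x. norm (f x) powr q)" and gi: "integrable M (\<lambda>x. norm (g x) powr q)"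
  shows integrable_norm_add_powr: "integrable M (\<lambda>x. norm (f x + g x) powr q)"
    and integral_norm_add_powr_le: "integral\<^sup>L M (\<lambda>x. norm (f x + g x) powr q)
          \<le> 2 powr q * (integral\<^sup>L M (\<lambda>x. norm (f x) powr q) + integral\<^sup>L M (\<lambda>x. norm (g x) powr q))"
proof -
  have bound: "integrable M (\<lambda>x. 2 powr q * (norm (f x) powr q + norm (g x) powr q))"
    using fi gi by simp
  show fgi: "integrable M (\<lambda>x. norm (f x + g x) powr q)"
    by (rule Bochner_Integration.integrable_bound[OF bound]) (auto intro!: norm_add_powr_le q)
  have "integral\<^sup>L M (\<lambda>x. norm (f x + g x) powr q)
      \<le> integral\<^sup>L M (\<lambda>x. 2 powr q * (norm (f x) powr q + norm (g x) powr q))"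
    by (intro integral_mono fgi bound norm_add_powr_le q)
  also have "\<dots> = 2 powr q * (integral\<^sup>L M (\<lambda>x. norm (f x) powr q) + integral\<^sup>L M (\<lambda>x. norm (g x) powr q))"
    using fi gi by simp
  finally show "integral\<^sup>L M (\<lambda>x. norm (f x + g x) powr q)
          \<le> 2 powr q * (integral\<^sup>L M (\<lambda>x. norm (f x) powr q) + integral\<^sup>L M (\<lambda>x. norm (g x) powr q))" .
qed

lemma nn_integral_lebesgue_on:
  assumes "S \<in> sets lebesgue"
  shows "(\<integral>\<^sup>+x. F x \<partial>lebesgue_on S) = (\<integral>\<^sup>+x. F x * indicator S x \<partial>lborel)"
  using assms by (simp add: nn_integral_restrict_space nn_integral_completion)

lemma integrable_lebesgue_on_continuous:
  fixes F :: "'a::euclidean_space \<Rightarrow> real"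
  assumes S: "bounded S" "S \<in> sets lebesgue" and F: "continuous_on UNIV F"
  shows "integrable (lebesgue_on S) F"
proof -
  have "compact (F ` closure S)"
    using S by (intro compact_continuous_image continuous_on_subset[OF F]) (auto simp: compact_closure)
  then obtain B where "\<forall>y\<in>F ` closure S. norm y \<le> B"
    using compact_imp_bounded bounded_iff by metis
  then have "AE x in lebesgue_on S. norm (F x) \<le> B"
    using closure_subset by (intro AE_I2) (auto simp: space_restrict_space)
  moreover have "F \<in> borel_measurable (lebesgue_on S)"
    using S F by (intro continuous_imp_measurable_on_sets_lebesgue) (auto intro: continuous_on_subset)
  ultimately show ?thesis
    using S by (intro finite_measure.integrable_const_bound[OF finite_measure_lebesgue_on])
       (auto intro: bounded_set_imp_lmeasurable)
qed

lemma Lq_norm_nonneg: "Lq_norm q \<Omega> u \<ge> 0"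
  by (simp add: Lq_norm_def)

lemma Lq_norm_le_W_norm: "Lq_norm q \<Omega> u \<le> W_norm q \<Omega> (u, g)" "Lq_norm q \<Omega> g \<le> W_norm q \<Omega> (u, g)"
  using Lq_norm_nonneg[of q \<Omega> u] Lq_norm_nonneg[of q \<Omega> g] by (simp_all add: W_norm_def)

lemma integral_norm_powr_eq_Lq_norm_powr:
  assumes "q > 0"
  shows "integral\<^sup>L (lebesgue_on \<Omega>) (\<lambda>x. norm (u x) powr q) = Lq_norm q \<Omega> u powr q"
  using assms by (simp add: Lq_norm_def powr_powr integral_nonneg_AE)

lemma integral_norm_powr_tendsto_0:
  assumes "q > 0" "(\<lambda>k. Lq_norm q \<Omega> (F k)) \<longlonglongrightarrow> 0"
  shows "(\<lambda>k. integral\<^sup>L (lebesgue_on \<Omega>) (\<lambda>x. norm (F k x) powr q)) \<longlonglongrightarrow> 0"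
  unfolding integral_norm_powr_eq_Lq_norm_powr[OF assms(1)]
  using assms by (intro tendsto_zero_powrI[OF _ tendsto_const] always_eventually) (auto intro: Lq_norm_nonneg)

lemma abs_integral_le_Lq_norm_growth:
  fixes F :: "'a::euclidean_space \<Rightarrow> real"
    and w :: "'a \<Rightarrow> 'b::euclidean_space" and y :: "'a \<Rightarrow> 'c::euclidean_space"
  assumes M: "finite_measure (lebesgue_on \<Omega>)" and q: "q > 1" and k: "k \<ge> 0"
    and w: "Lq q \<Omega> w" "Lq_norm q \<Omega> w \<le> B" and y: "Lq q \<Omega> y" "Lq_norm q \<Omega> y \<le> N"
    and F: "AE x in lebesgue_on \<Omega>. \<bar>F x\<bar> \<le> k * ((1 + norm (w x) powr (q - 1)) * norm (y x))"
  shows "\<bar>integral\<^sup>L (lebesgue_on \<Omega>) F\<bar> \<le> k * N * (measure (lebesgue_on \<Omega>) \<Omega> + B powr q + 2)"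
proof -
  have "integral\<^sup>L (lebesgue_on \<Omega>) (\<lambda>x. norm (w x) powr q) = Lq_norm q \<Omega> w powr q"
    using q by (intro integral_norm_powr_eq_Lq_norm_powr) simp
  also have "\<dots> \<le> B powr q"
    using w(2) q Lq_norm_nonneg by (intro powr_mono2) auto
  finally have w_le: "integral\<^sup>L (lebesgue_on \<Omega>) (\<lambda>x. norm (w x) powr q) \<le> B powr q" .
  have "\<bar>integral\<^sup>L (lebesgue_on \<Omega>) F\<bar> \<le> k * Lq_norm q \<Omega> y
      * (measure (lebesgue_on \<Omega>) (space (lebesgue_on \<Omega>))
         + integral\<^sup>L (lebesgue_on \<Omega>) (\<lambda>x. norm (w x) powr q) + 2)"
    using abs_integral_le_powr_growth[OF M q k, of "\<lambda>x. norm (w x)" "\<lambda>x. norm (y x)" F] w y F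
    by (simp add: Lq_def Lq_norm_def)
  also have "\<dots> \<le> k * N * (measure (lebesgue_on \<Omega>) \<Omega> + B powr q + 2)"
    using w_le k y(2) Lq_norm_nonneg[of q \<Omega> y] Lq_norm_nonneg[of q \<Omega> w] w(2)
    by (intro mult_mono) (auto intro: add_nonneg_nonneg)
  finally show ?thesis .
qed

lemma test_fun_has_derivative:
  assumes "test_fun \<Omega> \<phi>"
  shows "(\<phi> has_derivative frechet_derivative \<phi> (at x)) (at x)"
proof -
  have "iter_pd [] \<phi> differentiable (at x)"
    using assms unfolding test_fun_def smooth_fun_def by blast
  then show ?thesis using frechet_derivative_works by auto
qed

lemma continuous_on_test_fun:
  assumes "test_fun \<Omega> \<phi>"
  shows "continuous_on UNIV \<phi>"
  using test_fun_has_derivative[OF assms]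
  by (meson continuous_at_imp_continuous_on differentiable_imp_continuous_within differentiableI)

lemma continuous_on_test_fun_derivative:
  assumes "test_fun \<Omega> \<phi>"
  shows "continuous_on UNIV (\<lambda>x. frechet_derivative \<phi> (at x) v)"
proof -
  have "iter_pd [v] \<phi> differentiable (at x)" for x
    using assms unfolding test_fun_def smooth_fun_def by blast
  then show ?thesis
    by (intro differentiable_imp_continuous_on differentiable_at_imp_differentiable_on) auto
qed

lemma continuous_on_grad_test_fun:
  assumes "test_fun \<Omega> \<phi>"
  shows "continuous_on UNIV (grad \<phi>)"
  unfolding grad_def[abs_def]
  by (intro continuous_intros continuous_on_test_fun_derivative[OF assms])

lemma test_fun_eq_0_outside:
  assumes "test_fun \<Omega> \<phi>" "x \<notin> \<Omega>"
  shows "\<phi> x = 0"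
proof -
  have "x \<notin> tsupport \<phi>" using assms unfolding test_fun_def by auto
  then show ?thesis using closure_subset[of "{x. \<phi> x \<noteq> 0}"] unfolding tsupport_def by auto
qed

lemma test_fun_derivative_eq_0_outside:
  assumes "test_fun \<Omega> \<phi>" "x \<notin> \<Omega>"
  shows "frechet_derivative \<phi> (at x) = (\<lambda>_. 0)"
proof -
  let ?S = "- tsupport \<phi>"
  have S: "open ?S" "x \<in> ?S" using assms unfolding test_fun_def tsupport_def by auto
  have "\<forall>y\<in>?S. \<phi> y = 0"
    using closure_subset[of "{x. \<phi> x \<noteq> 0}"] unfolding tsupport_def by auto
  then have "(\<phi> has_derivative (\<lambda>_. 0)) (at x)"
    using has_derivative_transform_within_open[of "\<lambda>_. 0" "\<lambda>_. 0" x UNIV ?S \<phi>] S by simp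
  then show ?thesis by (rule frechet_derivative_at[symmetric])
qed

lemma inner_grad_Basis:
  assumes "e \<in> Basis"
  shows "grad \<phi> x \<bullet> e = frechet_derivative \<phi> (at x) e"
  unfolding grad_def using assms
  by (simp add: inner_sum_left inner_Basis if_distrib cong: if_cong)

lemma measurable_test_fun [measurable]:
  assumes "test_fun \<Omega> \<phi>" "\<Omega> \<in> sets lebesgue"
  shows "\<phi> \<in> borel_measurable (lebesgue_on \<Omega>)" "grad \<phi> \<in> borel_measurable (lebesgue_on \<Omega>)"
  using assms continuous_on_test_fun[OF assms(1)] continuous_on_grad_test_fun[OF assms(1)]
  by (auto intro!: continuous_imp_measurable_on_sets_lebesgue intro: continuous_on_subset)

lemma integrable_test_fun_powr:
  assumes "test_fun \<Omega> \<phi>" "bounded \<Omega>" "\<Omega> \<in> sets lebesgue" "q > 0"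
  shows "integrable (lebesgue_on \<Omega>) (\<lambda>x. \<bar>\<phi> x\<bar> powr q)"
    "integrable (lebesgue_on \<Omega>) (\<lambda>x. norm (grad \<phi> x) powr q)"
  using assms
  by (intro integrable_lebesgue_on_continuous continuous_on_powr' continuous_intros
      continuous_on_test_fun continuous_on_grad_test_fun; simp)+

section \<open>Poincare's inequality\<close>

lemma integral_directional_derivative_segment:
  fixes \<phi> :: "'a::euclidean_space \<Rightarrow> real"
  assumes L: "L \<ge> 0"
    and deriv: "\<And>y. (\<phi> has_derivative D y) (at y)"
    and cont: "continuous_on UNIV (\<lambda>y. D y e)"
  shows "integral\<^sup>L (restrict_space lborel {0..L}) (\<lambda>t. D (x + t *\<^sub>R e) e) = \<phi> (x + L *\<^sub>R e) - \<phi> x"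
proof -
  have "((\<lambda>t. \<phi> (x + t *\<^sub>R e)) has_vector_derivative D (x + t *\<^sub>R e) e) (at t within {0..L})" for t
  proof -
    have "((\<lambda>t. x + t *\<^sub>R e) has_derivative (\<lambda>h. h *\<^sub>R e)) (at t within {0..L})"
      by (auto intro!: derivative_eq_intros)
    then have "((\<lambda>t. \<phi> (x + t *\<^sub>R e)) has_derivative (\<lambda>h. D (x + t *\<^sub>R e) (h *\<^sub>R e))) (at t within {0..L})"
      by (rule has_derivative_compose[OF _ deriv])
    then show ?thesis
      using linear_cmul[OF has_derivative_linear[OF deriv]] by (simp add: has_vector_derivative_def)
  qed
  moreover have "continuous_on {0..L} (\<lambda>t. D (x + t *\<^sub>R e) e)"
    by (intro continuous_on_compose2[OF cont] continuous_intros) auto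
  ultimately have "integral\<^sup>L lborel (\<lambda>t. indicator {0..L} t *\<^sub>R D (x + t *\<^sub>R e) e)
      = \<phi> (x + L *\<^sub>R e) - \<phi> (x + 0 *\<^sub>R e)"
    using L by (intro integral_FTC_atLeastAtMost) auto
  then show ?thesis by (simp add: integral_restrict_space)
qed

lemma abs_powr_le_segment_integral:
  fixes \<phi> :: "'a::euclidean_space \<Rightarrow> real"
  assumes q: "q > 1" and L: "L > 0"
    and deriv: "\<And>y. (\<phi> has_derivative D y) (at y)"
    and cont: "continuous_on UNIV (\<lambda>y. D y e)"
    and vanish: "\<phi> (x + L *\<^sub>R e) = 0"
  shows "ennreal (\<bar>\<phi> x\<bar> powr q)
    \<le> ennreal ((L + 2) powr q) * (\<integral>\<^sup>+t. ennreal (\<bar>D (x + t *\<^sub>R e) e\<bar> powr q) * indicator {0..L} t \<partial>lborel)"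
proof -
  define d where "d t = D (x + t *\<^sub>R e) e" for t
  let ?S = "restrict_space lborel {0..L}"
  let ?I = "integral\<^sup>L ?S (\<lambda>t. \<bar>d t\<bar> powr q)"
  have S_finite: "finite_measure ?S"
    using L by (intro finite_measureI) (simp add: emeasure_restrict_space emeasure_lborel_Icc)
  have "continuous_on {0..L} (\<lambda>t. \<bar>d t\<bar> powr q)"
    using q unfolding d_def
    by (intro continuous_on_powr' continuous_intros continuous_on_compose2[OF cont]) auto
  from borel_integrable_atLeastAtMost'[OF this] have dq_int: "integrable ?S (\<lambda>t. \<bar>d t\<bar> powr q)"
    by (simp add: integrable_restrict_space set_integrable_def)
  have "\<bar>\<phi> x\<bar> = \<bar>integral\<^sup>L ?S d\<bar>"
    using integral_directional_derivative_segment[OF _ deriv cont, of L x] L vanish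
    by (simp add: d_def[abs_def])
  also have "\<dots> \<le> 1 * ?I powr (1 / q) * (measure ?S (space ?S) + integral\<^sup>L ?S (\<lambda>t. 0 powr q) + 2)"
    using dq_int by (intro abs_integral_le_powr_growth[OF S_finite q]) auto
  finally have "\<bar>\<phi> x\<bar> \<le> ?I powr (1 / q) * (L + 2)"
    using L by (simp add: measure_restrict_space)
  then have "\<bar>\<phi> x\<bar> powr q \<le> (?I powr (1 / q) * (L + 2)) powr q"
    using q by (intro powr_mono2) auto
  also have "\<dots> = (L + 2) powr q * ?I"
    using q L by (simp add: powr_mult powr_powr integral_nonneg_AE)
  finally have "ennreal (\<bar>\<phi> x\<bar> powr q) \<le> ennreal ((L + 2) powr q) * ennreal ?I"
    by (simp add: ennreal_leI flip: ennreal_mult)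
  also have "ennreal ?I = (\<integral>\<^sup>+t. ennreal (\<bar>d t\<bar> powr q) * indicator {0..L} t \<partial>lborel)"
    using dq_int by (simp add: nn_integral_eq_integral[symmetric] nn_integral_restrict_space)
  finally show ?thesis unfolding d_def .
qed

lemma nn_integral_lborel_translate:
  fixes F :: "'a::euclidean_space \<Rightarrow> ennreal"
  assumes "F \<in> borel_measurable borel"
  shows "(\<integral>\<^sup>+x. F (x + c) \<partial>lborel) = (\<integral>\<^sup>+x. F x \<partial>lborel)"
proof -
  have "(\<integral>\<^sup>+x. F x \<partial>lborel) = (\<integral>\<^sup>+x. F x \<partial>distr lborel borel ((+) c))"
    by (simp add: lborel_distr_plus)
  also have "\<dots> = (\<integral>\<^sup>+x. F (c + x) \<partial>lborel)"
    using assms by (intro nn_integral_distr) auto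
  finally show ?thesis by (simp add: add.commute)
qed

lemma nn_integral_lborel_segment_shifts:
  fixes F :: "'a::euclidean_space \<Rightarrow> ennreal"
  assumes [measurable]: "F \<in> borel_measurable borel" and L: "L \<ge> 0"
  shows "(\<integral>\<^sup>+x. (\<integral>\<^sup>+t. F (x + t *\<^sub>R e) * indicator {0..L} t \<partial>lborel) \<partial>lborel)
       = ennreal L * (\<integral>\<^sup>+x. F x \<partial>lborel)"
proof -
  have "(\<integral>\<^sup>+x. (\<integral>\<^sup>+t. F (x + t *\<^sub>R e) * indicator {0..L} t \<partial>lborel) \<partial>lborel)
      = (\<integral>\<^sup>+t. (\<integral>\<^sup>+x. F (x + t *\<^sub>R e) * indicator {0..L} t \<partial>lborel) \<partial>lborel)"
    by (rule lborel_pair.Fubini') measurable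
  also have "\<dots> = (\<integral>\<^sup>+t. (\<integral>\<^sup>+x. F x \<partial>lborel) * indicator {0..L} t \<partial>lborel)"
    by (simp add: nn_integral_multc nn_integral_lborel_translate)
  also have "\<dots> = ennreal L * (\<integral>\<^sup>+x. F x \<partial>lborel)"
    using L by (simp add: nn_integral_cmult_indicator emeasure_lborel_Icc mult.commute)
  finally show ?thesis .
qed

lemma bounded_translate_outside:
  fixes \<Omega> :: "'a::real_normed_vector set"
  assumes "bounded \<Omega>" "norm e = 1"
  obtains L where "L > 0" "\<And>x. x \<in> \<Omega> \<Longrightarrow> x + L *\<^sub>R e \<notin> \<Omega>"
proof -
  obtain R where R: "R > 0" "\<Omega> \<subseteq> ball 0 R" using bounded_subset_ballD[OF assms(1)] by blast
  show ?thesis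
  proof (rule that[of "2 * R"])
    fix x assume "x \<in> \<Omega>"
    show "x + (2 * R) *\<^sub>R e \<notin> \<Omega>"
    proof
      assume "x + (2 * R) *\<^sub>R e \<in> \<Omega>"
      with \<open>x \<in> \<Omega>\<close> R have "norm (x + (2 * R) *\<^sub>R e) < R" "norm x < R" by auto
      moreover have "norm ((2 * R) *\<^sub>R e) \<le> norm (x + (2 * R) *\<^sub>R e) + norm x"
        using norm_triangle_ineq4[of "x + (2 * R) *\<^sub>R e" x] by simp
      ultimately show False using assms(2) R by simp
    qed
  qed (use R in simp)
qed

lemma poincare_test_fun_lborel:
  fixes \<Omega> :: "'a::euclidean_space set"
  assumes "bounded \<Omega>" and q: "q > 1"
  obtains C where "C \<ge> 0" "\<And>\<phi>. test_fun \<Omega> \<phi> \<Longrightarrow>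
     (\<integral>\<^sup>+x. ennreal (\<bar>\<phi> x\<bar> powr q) \<partial>lborel)
       \<le> ennreal C * (\<integral>\<^sup>+x. ennreal (norm (grad \<phi> x) powr q) * indicator \<Omega> x \<partial>lborel)"
proof -
  obtain e :: 'a where e: "e \<in> Basis" using nonempty_Basis by blast
  obtain L where L: "L > 0" and leave: "\<And>x. x \<in> \<Omega> \<Longrightarrow> x + L *\<^sub>R e \<notin> \<Omega>"
    using bounded_translate_outside[OF assms(1), of e] e by auto
  show ?thesis
  proof (rule that[of "(L + 2) powr q * L"])
    show "(L + 2) powr q * L \<ge> 0" using L by simp
    fix \<phi> assume \<phi>: "test_fun \<Omega> \<phi>"
    define F where "F y = ennreal (\<bar>frechet_derivative \<phi> (at y) e\<bar> powr q)" for y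
    have [measurable]: "F \<in> borel_measurable borel"
      unfolding F_def using q
      by (intro measurable_compose[OF _ measurable_ennreal] borel_measurable_continuous_onI
          continuous_on_powr' continuous_intros continuous_on_test_fun_derivative[OF \<phi>]) auto
    have pointwise: "ennreal (\<bar>\<phi> x\<bar> powr q)
        \<le> ennreal ((L + 2) powr q) * (\<integral>\<^sup>+t. F (x + t *\<^sub>R e) * indicator {0..L} t \<partial>lborel)" for x
      using test_fun_eq_0_outside[OF \<phi>] leave q unfolding F_def
      by (cases "x \<in> \<Omega>") (auto intro!: abs_powr_le_segment_integral q L test_fun_has_derivative[OF \<phi>]
          continuous_on_test_fun_derivative[OF \<phi>])
    have F_le: "F y \<le> ennreal (norm (grad \<phi> y) powr q) * indicator \<Omega> y" for y
      using Basis_le_norm[OF e, of "grad \<phi> y"] test_fun_derivative_eq_0_outside[OF \<phi>, of y] q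
      unfolding F_def by (cases "y \<in> \<Omega>") (auto simp: inner_grad_Basis[OF e] intro!: ennreal_leI powr_mono2)
    have "(\<integral>\<^sup>+x. ennreal (\<bar>\<phi> x\<bar> powr q) \<partial>lborel)
        \<le> ennreal ((L + 2) powr q) * (\<integral>\<^sup>+x. (\<integral>\<^sup>+t. F (x + t *\<^sub>R e) * indicator {0..L} t \<partial>lborel) \<partial>lborel)"
      by (subst nn_integral_cmult[symmetric]) (measurable, intro nn_integral_mono pointwise)
    also have "\<dots> = ennreal ((L + 2) powr q) * (ennreal L * (\<integral>\<^sup>+x. F x \<partial>lborel))"
      using L by (simp add: nn_integral_lborel_segment_shifts)
    also have "\<dots> \<le> ennreal ((L + 2) powr q * L)
        * (\<integral>\<^sup>+x. ennreal (norm (grad \<phi> x) powr q) * indicator \<Omega> x \<partial>lborel)"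
      using L by (simp add: ennreal_mult mult.assoc mult_left_mono nn_integral_mono F_le)
    finally show "(\<integral>\<^sup>+x. ennreal (\<bar>\<phi> x\<bar> powr q) \<partial>lborel)
        \<le> ennreal ((L + 2) powr q * L) * (\<integral>\<^sup>+x. ennreal (norm (grad \<phi> x) powr q) * indicator \<Omega> x \<partial>lborel)" .
  qed
qed

lemma poincare_test_fun:
  fixes \<Omega> :: "'a::euclidean_space set"
  assumes \<Omega>: "bounded \<Omega>" "\<Omega> \<in> sets lebesgue" and q: "q > 1"
  obtains C where "C \<ge> 0" "\<And>\<phi>. test_fun \<Omega> \<phi> \<Longrightarrow>
     integral\<^sup>L (lebesgue_on \<Omega>) (\<lambda>x. \<bar>\<phi> x\<bar> powr q)
       \<le> C * integral\<^sup>L (lebesgue_on \<Omega>) (\<lambda>x. norm (grad \<phi> x) powr q)"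
proof -
  obtain C where C: "C \<ge> 0" and le: "\<And>\<phi>. test_fun \<Omega> \<phi> \<Longrightarrow>
     (\<integral>\<^sup>+x. ennreal (\<bar>\<phi> x\<bar> powr q) \<partial>lborel)
       \<le> ennreal C * (\<integral>\<^sup>+x. ennreal (norm (grad \<phi> x) powr q) * indicator \<Omega> x \<partial>lborel)"
    using poincare_test_fun_lborel[OF \<Omega>(1) q] by blast
  show ?thesis
  proof (rule that[OF C])
    fix \<phi> assume \<phi>: "test_fun \<Omega> \<phi>"
    let ?G = "integral\<^sup>L (lebesgue_on \<Omega>) (\<lambda>x. norm (grad \<phi> x) powr q)"
    have "(\<integral>\<^sup>+x. ennreal (\<bar>\<phi> x\<bar> powr q) \<partial>lebesgue_on \<Omega>)
        = (\<integral>\<^sup>+x. ennreal (\<bar>\<phi> x\<bar> powr q) \<partial>lborel)"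
      using \<Omega> test_fun_eq_0_outside[OF \<phi>] q
      by (auto simp: nn_integral_lebesgue_on indicator_def intro!: nn_integral_cong)
    also have "\<dots> \<le> ennreal C * (\<integral>\<^sup>+x. ennreal (norm (grad \<phi> x) powr q) \<partial>lebesgue_on \<Omega>)"
      using le[OF \<phi>] \<Omega> by (simp add: nn_integral_lebesgue_on)
    also have "\<dots> = ennreal (C * ?G)"
      using integrable_test_fun_powr[OF \<phi> \<Omega>, of q] C q
      by (simp add: nn_integral_eq_integral ennreal_mult integral_nonneg_AE)
    finally show "integral\<^sup>L (lebesgue_on \<Omega>) (\<lambda>x. \<bar>\<phi> x\<bar> powr q) \<le> C * ?G"
      using C by (intro integral_real_bounded) (auto intro: integral_nonneg_AE)
  qed
qed

lemma integral_powr_le_test_fun_approx: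
  fixes \<Omega> :: "'a::euclidean_space set"
  assumes \<Omega>: "bounded \<Omega>" "\<Omega> \<in> sets lebesgue" and q: "q > 1" and C: "C \<ge> 0"
    and \<phi>: "test_fun \<Omega> \<phi>" and Lu: "Lq q \<Omega> u" and Lg: "Lq q \<Omega> g"
    and poincare: "integral\<^sup>L (lebesgue_on \<Omega>) (\<lambda>x. \<bar>\<phi> x\<bar> powr q)
        \<le> C * integral\<^sup>L (lebesgue_on \<Omega>) (\<lambda>x. norm (grad \<phi> x) powr q)"
  defines "Q \<equiv> 2 powr q"
  shows "integral\<^sup>L (lebesgue_on \<Omega>) (\<lambda>x. \<bar>u x\<bar> powr q)
    \<le> Q * integral\<^sup>L (lebesgue_on \<Omega>) (\<lambda>x. \<bar>u x - \<phi> x\<bar> powr q)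
      + Q * C * Q * (integral\<^sup>L (lebesgue_on \<Omega>) (\<lambda>x. norm (g x - grad \<phi> x) powr q)
                     + integral\<^sup>L (lebesgue_on \<Omega>) (\<lambda>x. norm (g x) powr q))"
proof -
  let ?M = "lebesgue_on \<Omega>"
  have [measurable]: "u \<in> borel_measurable ?M" "g \<in> borel_measurable ?M"
    and u_int: "integrable ?M (\<lambda>x. \<bar>u x\<bar> powr q)" and g_int: "integrable ?M (\<lambda>x. norm (g x) powr q)"
    using Lu Lg unfolding Lq_def by auto
  note \<phi>_int = integrable_test_fun_powr[OF \<phi> \<Omega>, of q]
  have "integrable ?M (\<lambda>x. \<bar>u x - \<phi> x\<bar> powr q)"
    using integrable_norm_add_powr[of q u ?M "\<lambda>x. - \<phi> x"] u_int \<phi>_int \<phi> \<Omega> q by simp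
  then have "integral\<^sup>L ?M (\<lambda>x. \<bar>u x\<bar> powr q)
      \<le> Q * (integral\<^sup>L ?M (\<lambda>x. \<bar>u x - \<phi> x\<bar> powr q) + integral\<^sup>L ?M (\<lambda>x. \<bar>\<phi> x\<bar> powr q))"
    using integral_norm_add_powr_le[of q "\<lambda>x. u x - \<phi> x" ?M \<phi>] \<phi>_int \<phi> \<Omega> q by (simp add: Q_def)
  moreover have "integral\<^sup>L ?M (\<lambda>x. norm (grad \<phi> x) powr q)
      \<le> Q * (integral\<^sup>L ?M (\<lambda>x. norm (g x - grad \<phi> x) powr q) + integral\<^sup>L ?M (\<lambda>x. norm (g x) powr q))"
    using integral_norm_add_powr_le[of q "\<lambda>x. grad \<phi> x - g x" ?M g]
      integrable_norm_add_powr[of q "grad \<phi>" ?M "\<lambda>x. - g x"] \<phi>_int g_int \<phi> \<Omega> q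
    by (simp add: Q_def norm_minus_commute add.commute)
  then have "Q * integral\<^sup>L ?M (\<lambda>x. \<bar>\<phi> x\<bar> powr q)
      \<le> Q * (C * (Q * (integral\<^sup>L ?M (\<lambda>x. norm (g x - grad \<phi> x) powr q)
                     + integral\<^sup>L ?M (\<lambda>x. norm (g x) powr q))))"
    using poincare C by (intro mult_left_mono) (auto simp: Q_def intro: order_trans mult_left_mono)
  ultimately show ?thesis by (simp add: algebra_simps)
qed

lemma poincare_W0:
  fixes \<Omega> :: "'a::euclidean_space set"
  assumes \<Omega>: "bounded \<Omega>" "\<Omega> \<in> sets lebesgue" and q: "q > 1"
  obtains C where "C \<ge> 0" "\<And>u g. (u, g) \<in> W0 q \<Omega> \<Longrightarrow>
     integral\<^sup>L (lebesgue_on \<Omega>) (\<lambda>x. \<bar>u x\<bar> powr q)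
       \<le> C * integral\<^sup>L (lebesgue_on \<Omega>) (\<lambda>x. norm (g x) powr q)"
proof -
  let ?M = "lebesgue_on \<Omega>"
  define Q where "Q = (2::real) powr q"
  obtain C where C: "C \<ge> 0" and test: "\<And>\<phi>. test_fun \<Omega> \<phi> \<Longrightarrow>
     integral\<^sup>L ?M (\<lambda>x. \<bar>\<phi> x\<bar> powr q) \<le> C * integral\<^sup>L ?M (\<lambda>x. norm (grad \<phi> x) powr q)"
    using poincare_test_fun[OF \<Omega> q] by blast
  show ?thesis
  proof (rule that[of "Q * C * Q"])
    show "Q * C * Q \<ge> 0" using C by (simp add: Q_def)
    fix u g assume "(u, g) \<in> W0 q \<Omega>"
    then obtain \<phi> where Lq: "Lq q \<Omega> u" "Lq q \<Omega> g" and \<phi>: "\<And>k. test_fun \<Omega> (\<phi> k)"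
      and u_lim: "(\<lambda>k. Lq_norm q \<Omega> (\<lambda>x. u x - \<phi> k x)) \<longlonglongrightarrow> 0"
      and g_lim: "(\<lambda>k. Lq_norm q \<Omega> (\<lambda>x. g x - grad (\<phi> k) x)) \<longlonglongrightarrow> 0"
      unfolding W0_def by blast
    let ?G = "integral\<^sup>L ?M (\<lambda>x. norm (g x) powr q)"
    have "(\<lambda>k. Q * integral\<^sup>L ?M (\<lambda>x. \<bar>u x - \<phi> k x\<bar> powr q)
        + Q * C * Q * (integral\<^sup>L ?M (\<lambda>x. norm (g x - grad (\<phi> k) x) powr q) + ?G))
        \<longlonglongrightarrow> Q * 0 + Q * C * Q * (0 + ?G)"
      using integral_norm_powr_tendsto_0[OF _ u_lim] integral_norm_powr_tendsto_0[OF _ g_lim] q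
      by (intro tendsto_intros) auto
    moreover have "integral\<^sup>L ?M (\<lambda>x. \<bar>u x\<bar> powr q)
        \<le> Q * integral\<^sup>L ?M (\<lambda>x. \<bar>u x - \<phi> k x\<bar> powr q)
          + Q * C * Q * (integral\<^sup>L ?M (\<lambda>x. norm (g x - grad (\<phi> k) x) powr q) + ?G)" for k
      unfolding Q_def by (rule integral_powr_le_test_fun_approx[OF \<Omega> q C \<phi> Lq test[OF \<phi>]])
    ultimately show "integral\<^sup>L ?M (\<lambda>x. \<bar>u x\<bar> powr q) \<le> Q * C * Q * ?G"
      using LIMSEQ_le_const[of _ "Q * 0 + Q * C * Q * (0 + ?G)"] by auto
  qed
qed

section \<open>Boundedness and coercivity of the operator\<close>

lemma abs_opI_le:
  assumes "\<epsilon> \<ge> 0"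
  shows "\<bar>opI \<Omega> p q \<epsilon> f (u, g) (v, h)\<bar>
    \<le> (\<Sum>i\<in>Basis. \<bar>integral\<^sup>L (lebesgue_on \<Omega>)
          (\<lambda>x. \<bar>g x \<bullet> i\<bar> powr (p i (u x) - 2) * (g x \<bullet> i) * (h x \<bullet> i))\<bar>)
      + \<epsilon> * \<bar>integral\<^sup>L (lebesgue_on \<Omega>) (\<lambda>x. norm (g x) powr (q - 2) * (g x \<bullet> h x))\<bar>
      + \<bar>integral\<^sup>L (lebesgue_on \<Omega>) (\<lambda>x. f x (u x) * v x)\<bar>"
proof -
  have "\<bar>\<epsilon> * integral\<^sup>L (lebesgue_on \<Omega>) (\<lambda>x. norm (g x) powr (q - 2) * (g x \<bullet> h x))\<bar>
      = \<epsilon> * \<bar>integral\<^sup>L (lebesgue_on \<Omega>) (\<lambda>x. norm (g x) powr (q - 2) * (g x \<bullet> h x))\<bar>"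
    using assms by (simp add: abs_mult)
  then show ?thesis
    using sum_abs[of "\<lambda>i. integral\<^sup>L (lebesgue_on \<Omega>)
      (\<lambda>x. \<bar>g x \<bullet> i\<bar> powr (p i (u x) - 2) * (g x \<bullet> i) * (h x \<bullet> i))" Basis]
    unfolding opI_def Let_def fst_conv snd_conv by linarith
qed

lemma opI_bounded:
  fixes \<Omega> :: "'a::euclidean_space set" and p :: "'a \<Rightarrow> real \<Rightarrow> real"
  assumes M: "finite_measure (lebesgue_on \<Omega>)" and q: "q > 1"
    and p: "\<And>i t. i \<in> Basis \<Longrightarrow> 2 \<le> p i t \<and> p i t \<le> q"
    and r: "1 \<le> r" "r \<le> q" and c: "c \<ge> 0" and eps: "\<epsilon> \<ge> 0"
    and f_growth: "AE x in lebesgue_on \<Omega>. \<forall>t. \<bar>f x t\<bar> \<le> c * (1 + \<bar>t\<bar> powr (r - 1))"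
  shows "\<forall>B. \<exists>K. \<forall>ug\<in>W0 q \<Omega>. W_norm q \<Omega> ug \<le> B \<longrightarrow>
     (\<forall>vh\<in>W0 q \<Omega>. \<bar>opI \<Omega> p q \<epsilon> f ug vh\<bar> \<le> K * W_norm q \<Omega> vh)"
proof (intro allI)
  fix B
  let ?M = "lebesgue_on \<Omega>"
  define X where "X = measure ?M \<Omega> + B powr q + 2"
  have "\<bar>opI \<Omega> p q \<epsilon> f ug vh\<bar> \<le> (DIM('a) + \<epsilon> + 2 * c) * X * W_norm q \<Omega> vh"
    if ug: "ug \<in> W0 q \<Omega>" "W_norm q \<Omega> ug \<le> B" and vh: "vh \<in> W0 q \<Omega>" for ug vh
  proof -
    obtain u g v h where eq: "ug = (u, g)" "vh = (v, h)" by (cases ug, cases vh)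
    define N where "N = W_norm q \<Omega> vh"
    have Lq: "Lq q \<Omega> u" "Lq q \<Omega> g" "Lq q \<Omega> v" "Lq q \<Omega> h"
      using ug vh unfolding eq W0_def by auto
    have ug_le: "Lq_norm q \<Omega> u \<le> B" "Lq_norm q \<Omega> g \<le> B"
      using ug(2) Lq_norm_le_W_norm[where u=u and g=g] unfolding eq by (meson order_trans)+
    have vh_le: "Lq_norm q \<Omega> v \<le> N" "Lq_norm q \<Omega> h \<le> N"
      using Lq_norm_le_W_norm[where u=v and g=h] by (simp_all add: N_def eq)
    have "\<bar>integral\<^sup>L ?M (\<lambda>x. \<bar>g x \<bullet> i\<bar> powr (p i (u x) - 2) * (g x \<bullet> i) * (h x \<bullet> i))\<bar> \<le> 1 * N * X"
      if "i \<in> Basis" for i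
      unfolding X_def using p[OF that] that
      by (intro abs_integral_le_Lq_norm_growth[OF M q _ Lq(2) ug_le(2) Lq(4) vh_le(2)] AE_I2)
         (simp_all add: abs_anisotropic_term_le)
    then have anisotropic: "(\<Sum>i\<in>Basis. \<bar>integral\<^sup>L ?M
        (\<lambda>x. \<bar>g x \<bullet> i\<bar> powr (p i (u x) - 2) * (g x \<bullet> i) * (h x \<bullet> i))\<bar>) \<le> DIM('a) * (N * X)"
      by (intro sum_bounded_above) simp
    have "\<bar>integral\<^sup>L ?M (\<lambda>x. norm (g x) powr (q - 2) * (g x \<bullet> h x))\<bar> \<le> 1 * N * X"
      unfolding X_def
      by (intro abs_integral_le_Lq_norm_growth[OF M q _ Lq(2) ug_le(2) Lq(4) vh_le(2)] AE_I2)
         (simp_all add: abs_isotropic_term_le)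
    then have isotropic: "\<epsilon> * \<bar>integral\<^sup>L ?M (\<lambda>x. norm (g x) powr (q - 2) * (g x \<bullet> h x))\<bar> \<le> \<epsilon> * (N * X)"
      using eps by (intro mult_left_mono) auto
    have "AE x in ?M. \<bar>f x (u x) * v x\<bar> \<le> 2 * c * ((1 + norm (u x) powr (q - 1)) * norm (v x))"
      using f_growth by eventually_elim (simp add: abs_growth_mult_le[OF r c])
    then have lower_order: "\<bar>integral\<^sup>L ?M (\<lambda>x. f x (u x) * v x)\<bar> \<le> 2 * c * N * X"
      unfolding X_def using c
      by (intro abs_integral_le_Lq_norm_growth[OF M q _ Lq(1) ug_le(1) Lq(3) vh_le(1)]) auto
    show ?thesis
      using abs_opI_le[OF eps, of \<Omega> p q f u g v h] anisotropic isotropic lower_order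
      by (simp add: eq N_def algebra_simps)
  qed
  then show "\<exists>K. \<forall>ug\<in>W0 q \<Omega>. W_norm q \<Omega> ug \<le> B \<longrightarrow>
     (\<forall>vh\<in>W0 q \<Omega>. \<bar>opI \<Omega> p q \<epsilon> f ug vh\<bar> \<le> K * W_norm q \<Omega> vh)"
    by blast
qed

lemma abs_integral_growth_mult_self_le:
  fixes \<Omega> :: "'a::euclidean_space set"
  assumes M: "finite_measure (lebesgue_on \<Omega>)" and c: "c \<ge> 0" and C0: "C0 \<ge> 0"
    and sublinear: "\<And>t. t \<ge> 0 \<Longrightarrow> (1 + t powr (r - 1)) * t \<le> \<delta> * t powr q + C0"
    and u: "integrable (lebesgue_on \<Omega>) (\<lambda>x. \<bar>u x\<bar> powr q)"
    and f_growth: "AE x in lebesgue_on \<Omega>. \<forall>t. \<bar>f x t\<bar> \<le> c * (1 + \<bar>t\<bar> powr (r - 1))"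
  shows "\<bar>integral\<^sup>L (lebesgue_on \<Omega>) (\<lambda>x. f x (u x) * u x)\<bar>
    \<le> c * \<delta> * integral\<^sup>L (lebesgue_on \<Omega>) (\<lambda>x. \<bar>u x\<bar> powr q) + c * C0 * measure (lebesgue_on \<Omega>) \<Omega>"
proof -
  let ?M = "lebesgue_on \<Omega>"
  have int: "integrable ?M (\<lambda>x. \<delta> * \<bar>u x\<bar> powr q)" "integrable ?M (\<lambda>x. C0)"
    using u finite_measure.integrable_const[OF M] by auto
  have bound: "c * ((1 + \<bar>t\<bar> powr (r - 1)) * \<bar>t\<bar>) \<le> c * (\<delta> * \<bar>t\<bar> powr q + C0)" for t
    using sublinear[of "\<bar>t\<bar>"] c by (intro mult_left_mono) auto
  have "AE x in ?M. \<bar>f x (u x) * u x\<bar> \<le> c * (\<delta> * \<bar>u x\<bar> powr q + C0)"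
    using f_growth
  proof eventually_elim
    case (elim x)
    then have "\<bar>f x (u x)\<bar> * \<bar>u x\<bar> \<le> c * (1 + \<bar>u x\<bar> powr (r - 1)) * \<bar>u x\<bar>"
      by (intro mult_right_mono) auto
    then show ?case using bound[of "u x"] by (simp add: abs_mult mult.assoc)
  qed
  then have "\<bar>integral\<^sup>L ?M (\<lambda>x. f x (u x) * u x)\<bar> \<le> integral\<^sup>L ?M (\<lambda>x. c * (\<delta> * \<bar>u x\<bar> powr q + C0))"
    using int by (intro abs_integral_le_integral_AE) auto
  also have "\<dots> = c * (\<delta> * integral\<^sup>L ?M (\<lambda>x. \<bar>u x\<bar> powr q) + measure ?M \<Omega> * C0)"
    using int by (simp add: Bochner_Integration.integral_add)
  finally show ?thesis by (simp add: algebra_simps)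
qed

lemma opI_diag_lower_bound:
  fixes \<Omega> :: "'a::euclidean_space set" and p :: "'a \<Rightarrow> real \<Rightarrow> real"
  assumes M: "finite_measure (lebesgue_on \<Omega>)"
    and r: "1 \<le> r" "r < q" and c: "c > 0" and eps: "\<epsilon> > 0" and C: "C \<ge> 0"
    and poincare: "\<And>u g. (u, g) \<in> W0 q \<Omega> \<Longrightarrow> integral\<^sup>L (lebesgue_on \<Omega>) (\<lambda>x. \<bar>u x\<bar> powr q)
        \<le> C * integral\<^sup>L (lebesgue_on \<Omega>) (\<lambda>x. norm (g x) powr q)"
    and f_growth: "AE x in lebesgue_on \<Omega>. \<forall>t. \<bar>f x t\<bar> \<le> c * (1 + \<bar>t\<bar> powr (r - 1))"
  obtains A where "\<And>u g. (u, g) \<in> W0 q \<Omega> \<Longrightarrow>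
    \<epsilon> / 2 * integral\<^sup>L (lebesgue_on \<Omega>) (\<lambda>x. norm (g x) powr q) - A \<le> opI \<Omega> p q \<epsilon> f (u, g) (u, g)"
proof -
  let ?M = "lebesgue_on \<Omega>"
  define \<delta> where "\<delta> = \<epsilon> / (2 * c * (C + 1))"
  have \<delta>: "\<delta> > 0" using eps c C by (simp add: \<delta>_def)
  have c\<delta>C: "c * \<delta> * C \<le> \<epsilon> / 2"
  proof -
    have "c * \<delta> * C = \<epsilon> / 2 * (C / (C + 1))"
      using c C by (simp add: \<delta>_def field_simps add_nonneg_eq_0_iff)
    also have "\<dots> \<le> \<epsilon> / 2" using eps C by (simp add: field_simps)
    finally show ?thesis .
  qed
  obtain C0 where C0: "C0 \<ge> 0" "\<And>t. t \<ge> 0 \<Longrightarrow> (1 + t powr (r - 1)) * t \<le> \<delta> * t powr q + C0"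
    using sublinear_le_eps_powr_add_const[OF r \<delta>] by blast
  show ?thesis
  proof (rule that[of "c * C0 * measure ?M \<Omega>"])
    fix u g assume ug: "(u, g) \<in> W0 q \<Omega>"
    define G where "G = integral\<^sup>L ?M (\<lambda>x. norm (g x) powr q)"
    have "c * \<delta> * integral\<^sup>L ?M (\<lambda>x. \<bar>u x\<bar> powr q) \<le> c * \<delta> * C * G"
      using poincare[OF ug] c \<delta> by (simp add: G_def mult_left_mono)
    also have "\<dots> \<le> \<epsilon> / 2 * G"
      using c\<delta>C by (rule mult_right_mono) (simp add: G_def integral_nonneg_AE)
    moreover have "integrable ?M (\<lambda>x. \<bar>u x\<bar> powr q)" using ug by (simp add: W0_def Lq_def)
    ultimately have lower_order:
      "\<bar>integral\<^sup>L ?M (\<lambda>x. f x (u x) * u x)\<bar> \<le> \<epsilon> / 2 * G + c * C0 * measure ?M \<Omega>"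
      using abs_integral_growth_mult_self_le[OF M _ C0(1) C0(2) _ f_growth, of u] c by linarith
    have anisotropic: "0 \<le> (\<Sum>i\<in>Basis. integral\<^sup>L ?M
        (\<lambda>x. \<bar>g x \<bullet> i\<bar> powr (p i (u x) - 2) * (g x \<bullet> i) * (g x \<bullet> i)))"
      by (intro sum_nonneg integral_nonneg_AE AE_I2) (simp add: mult.assoc)
    have "opI \<Omega> p q \<epsilon> f (u, g) (u, g) = (\<Sum>i\<in>Basis. integral\<^sup>L ?M
        (\<lambda>x. \<bar>g x \<bullet> i\<bar> powr (p i (u x) - 2) * (g x \<bullet> i) * (g x \<bullet> i)))
        + \<epsilon> * G - integral\<^sup>L ?M (\<lambda>x. f x (u x) * u x)"
      by (simp add: opI_def G_def norm_powr_mult_inner_self)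
    then show "\<epsilon> / 2 * G - c * C0 * measure ?M \<Omega> \<le> opI \<Omega> p q \<epsilon> f (u, g) (u, g)"
      using anisotropic lower_order by linarith
  qed
qed

lemma W_norm_le_by_poincare:
  assumes q: "q > 0" and C: "C \<ge> 0"
    and poincare: "integral\<^sup>L (lebesgue_on \<Omega>) (\<lambda>x. \<bar>u x\<bar> powr q)
        \<le> C * integral\<^sup>L (lebesgue_on \<Omega>) (\<lambda>x. norm (g x) powr q)"
  shows "W_norm q \<Omega> (u, g)
    \<le> (C powr (1 / q) + 1) * integral\<^sup>L (lebesgue_on \<Omega>) (\<lambda>x. norm (g x) powr q) powr (1 / q)"
proof -
  let ?G = "integral\<^sup>L (lebesgue_on \<Omega>) (\<lambda>x. norm (g x) powr q)"
  have "Lq_norm q \<Omega> u \<le> (C * ?G) powr (1 / q)"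
    unfolding Lq_norm_def using poincare q by (intro powr_mono2) (auto intro: integral_nonneg_AE)
  also have "\<dots> = C powr (1 / q) * ?G powr (1 / q)" using C by (simp add: powr_mult integral_nonneg_AE)
  finally show ?thesis by (simp add: W_norm_def Lq_norm_def algebra_simps)
qed

lemma opI_coercive:
  fixes \<Omega> :: "'a::euclidean_space set" and p :: "'a \<Rightarrow> real \<Rightarrow> real"
  assumes M: "finite_measure (lebesgue_on \<Omega>)" and q: "q \<ge> 2"
    and r: "1 \<le> r" "r < q" and c: "c > 0" and eps: "\<epsilon> > 0" and C: "C \<ge> 0"
    and poincare: "\<And>u g. (u, g) \<in> W0 q \<Omega> \<Longrightarrow> integral\<^sup>L (lebesgue_on \<Omega>) (\<lambda>x. \<bar>u x\<bar> powr q)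
        \<le> C * integral\<^sup>L (lebesgue_on \<Omega>) (\<lambda>x. norm (g x) powr q)"
    and f_growth: "AE x in lebesgue_on \<Omega>. \<forall>t. \<bar>f x t\<bar> \<le> c * (1 + \<bar>t\<bar> powr (r - 1))"
  shows "\<forall>M. \<exists>R. \<forall>ug\<in>W0 q \<Omega>. W_norm q \<Omega> ug \<ge> R \<longrightarrow>
     opI \<Omega> p q \<epsilon> f ug ug / W_norm q \<Omega> ug \<ge> M"
proof (intro allI)
  fix M
  obtain A where A: "\<And>u g. (u, g) \<in> W0 q \<Omega> \<Longrightarrow>
      \<epsilon> / 2 * integral\<^sup>L (lebesgue_on \<Omega>) (\<lambda>x. norm (g x) powr q) - A \<le> opI \<Omega> p q \<epsilon> f (u, g) (u, g)"
    using opI_diag_lower_bound[OF M r c eps C poincare f_growth] by blast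
  define K where "K = C powr (1 / q) + 1"
  have K: "K > 0" unfolding K_def using powr_ge_zero[of C "1 / q"] by linarith
  obtain R where R: "\<And>W x. R \<le> W \<Longrightarrow> \<epsilon> / 2 * (W / K) powr q - A \<le> x \<Longrightarrow> M \<le> x / W"
    using coercive_of_powr_lower_bound[of "\<epsilon> / 2" K q A M] eps K q by auto
  have "M \<le> opI \<Omega> p q \<epsilon> f (u, g) (u, g) / W_norm q \<Omega> (u, g)"
    if ug: "(u, g) \<in> W0 q \<Omega>" "R \<le> W_norm q \<Omega> (u, g)" for u g
  proof (rule R[OF ug(2)])
    let ?G = "integral\<^sup>L (lebesgue_on \<Omega>) (\<lambda>x. norm (g x) powr q)"
    have "W_norm q \<Omega> (u, g) / K \<le> ?G powr (1 / q)"
      using W_norm_le_by_poincare[of q C \<Omega> u g] poincare[OF ug(1)] q C K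
      by (simp add: K_def pos_divide_le_eq mult.commute)
    then have "(W_norm q \<Omega> (u, g) / K) powr q \<le> (?G powr (1 / q)) powr q"
      using K q by (intro powr_mono2) (auto simp: W_norm_def Lq_norm_def)
    also have "\<dots> = ?G" using q by (simp add: powr_powr integral_nonneg_AE)
    finally have "\<epsilon> / 2 * (W_norm q \<Omega> (u, g) / K) powr q \<le> \<epsilon> / 2 * ?G"
      using eps by (intro mult_left_mono) auto
    then show "\<epsilon> / 2 * (W_norm q \<Omega> (u, g) / K) powr q - A \<le> opI \<Omega> p q \<epsilon> f (u, g) (u, g)"
      using A[OF ug(1)] by linarith
  qed
  then show "\<exists>R. \<forall>ug\<in>W0 q \<Omega>. W_norm q \<Omega> ug \<ge> R \<longrightarrow> opI \<Omega> p q \<epsilon> f ug ug / W_norm q \<Omega> ug \<ge> M"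
    by (intro exI[of _ R]) (simp add: split_paired_all)
qed

lemma le_Max_pplus:
  assumes "finite I" "i \<in> I" "bdd_above (range (p i))"
  shows "p i t \<le> Max ((\<lambda>i. pplus (p i)) ` I)"
proof -
  have "p i t \<le> pplus (p i)" unfolding pplus_def using assms(3) by (intro cSup_upper) auto
  also have "\<dots> \<le> Max ((\<lambda>i. pplus (p i)) ` I)" using assms(1,2) by (intro Max_ge) auto
  finally show ?thesis .
qed

lemma Min_pminus_le:
  assumes "finite I" "i \<in> I" "bdd_below (range (p i))"
  shows "Min ((\<lambda>i. pminus (p i)) ` I) \<le> p i t"
proof -
  have "Min ((\<lambda>i. pminus (p i)) ` I) \<le> pminus (p i)" using assms(1,2) by (intro Min_le) auto
  also have "\<dots> \<le> p i t" unfolding pminus_def using assms(3) by (intro cInf_lower) auto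
  finally show ?thesis .
qed

theorem lemma3p5:
  fixes \<Omega> :: "'a::euclidean_space set"
    and p :: "'a \<Rightarrow> real \<Rightarrow> real"
    and f :: "'a \<Rightarrow> real \<Rightarrow> real"
    and c r \<epsilon> :: real
  defines "Pm \<equiv> Min ((\<lambda>i. pminus (p i)) ` Basis)"
      and "Pp \<equiv> Max ((\<lambda>i. pplus (p i)) ` Basis)"
  assumes dim: "DIM('a) \<ge> 2"
    and dom: "lipschitz_domain \<Omega>"
    and p_cont: "\<forall>i\<in>Basis. continuous_on UNIV (p i)"
    and p_ge2: "\<forall>i\<in>Basis. \<forall>t. p i t \<ge> 2"
    and p_bdd: "\<forall>i\<in>Basis. bdd_above (range (p i))"
    and p_gtN: "\<forall>i\<in>Basis. real DIM('a) < pminus (p i)"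
    and f_car: "caratheodory \<Omega> f"
    and f_neg: "AE x in lebesgue_on \<Omega>. f x 0 < 0"
    and c_pos: "c > 0"
    and r: "1 \<le> r" "r < Pm"
    and f_growth: "AE x in lebesgue_on \<Omega>. \<forall>t. \<bar>f x t\<bar> \<le> c * (1 + \<bar>t\<bar> powr (r - 1))"
    and eps: "\<epsilon> > 0"
  shows "(\<forall>M. \<exists>R. \<forall>ug\<in>W0 Pp \<Omega>. W_norm Pp \<Omega> ug \<ge> R \<longrightarrow>
              opI \<Omega> p Pp \<epsilon> f ug ug / W_norm Pp \<Omega> ug \<ge> M)
       \<and> (\<forall>B. \<exists>K. \<forall>ug\<in>W0 Pp \<Omega>. W_norm Pp \<Omega> ug \<le> B \<longrightarrow>
              (\<forall>vh\<in>W0 Pp \<Omega>. \<bar>opI \<Omega> p Pp \<epsilon> f ug vh\<bar> \<le> K * W_norm Pp \<Omega> vh))"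
proof -
  \<comment> \<open>Only openness and boundedness of \<open>\<Omega>\<close>, \<open>2 \<le> p i \<le> Pp\<close>, \<open>r < Pm\<close> and the growth of \<open>f\<close>
    are used: \<open>opI\<close> consists of Bochner integrals, which vanish on non-integrable integrands,
    and all estimates hold for those as well.\<close>
  have "bounded \<Omega>" "\<Omega> \<in> lmeasurable"
    using dom lmeasurable_open by (auto simp: lipschitz_domain_def)
  then have \<Omega>: "bounded \<Omega>" "\<Omega> \<in> sets lebesgue" "finite_measure (lebesgue_on \<Omega>)"
    by (auto simp: fmeasurableD finite_measure_lebesgue_on)
  have p_le: "p i t \<le> Pp" if "i \<in> Basis" for i t
    unfolding Pp_def using p_bdd that by (intro le_Max_pplus) auto
  obtain i0 :: 'a where i0: "i0 \<in> Basis" using nonempty_Basis by blast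
  have "Pm \<le> p i0 0" "2 \<le> p i0 0"
    unfolding Pm_def using p_ge2 i0 by (auto intro!: Min_pminus_le bdd_belowI[of _ 2])
  then have q: "Pp \<ge> 2" and r_lt: "r < Pp" using p_le[OF i0, of 0] r by linarith+
  obtain C where "C \<ge> 0" "\<And>u g. (u, g) \<in> W0 Pp \<Omega> \<Longrightarrow>
      integral\<^sup>L (lebesgue_on \<Omega>) (\<lambda>x. \<bar>u x\<bar> powr Pp)
        \<le> C * integral\<^sup>L (lebesgue_on \<Omega>) (\<lambda>x. norm (g x) powr Pp)"
    using poincare_W0[OF \<Omega>(1,2), of Pp] q by auto
  then show ?thesis
    using opI_coercive[OF \<Omega>(3) q r(1) r_lt c_pos eps _ _ f_growth, of C p]
      opI_bounded[OF \<Omega>(3) _ _ r(1) _ _ _ f_growth, of Pp p \<epsilon>] q r_lt c_pos eps p_ge2 p_le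
    by auto
qed

end
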